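(* Let $D$ be a directed acyclic graph with $n$ nodes and exactly one source. Then the burning number of $D$ is at most $\left\lceil \sqrt{2n+\tfrac14}-\tfrac12\right\rceil$.
   Context: Burning process on a digraph $D$: a sequence $(x_1,\ldots,x_b)$ of nodes is a burning sequence for $D$ if after $b$ steps of the following process every node of $D$ is burned; the $i$-th step consists of first burning all out-neighbours of all currently burned nodes, and then burning the node $x_i$. The burning number of $D$ is the length of a shortest burning sequence. Equivalently, with $N^+_k(v)$ the set of nodes reachable from $v$ by a directed path with at most $k$ arcs, the burning number is the least $b$ such that there are nodes $v_1,\ldots,v_b$ with $V(D)=\bigcup_{i=1}^b N^+_{i-1}(v_i)$. *)

theory Defs
  imports Complex_Main
begin

definition digraph :: "'a set \<Rightarrow> ('a \<times> 'a) set \<Rightarrow> bool" where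
  "digraph V E \<longleftrightarrow> finite V \<and> E \<subseteq> V \<times> V"

definition dag :: "'a set \<Rightarrow> ('a \<times> 'a) set \<Rightarrow> bool" where
  "dag V E \<longleftrightarrow> digraph V E \<and> acyclic E"

definition sources :: "'a set \<Rightarrow> ('a \<times> 'a) set \<Rightarrow> 'a set" where
  "sources V E = {v \<in> V. \<forall>u. (u, v) \<notin> E}"

definition out_ball :: "('a \<times> 'a) set \<Rightarrow> nat \<Rightarrow> 'a \<Rightarrow> 'a set" where
  "out_ball E k v = {w. \<exists>j\<le>k. (v, w) \<in> E ^^ j}"

definition is_burning_seq :: "'a set \<Rightarrow> ('a \<times> 'a) set \<Rightarrow> 'a list \<Rightarrow> bool" where
  "is_burning_seq V E vs \<longleftrightarrow> set vs \<subseteq> V \<and>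
     V = (\<Union>i<length vs. out_ball E i (vs ! i))"

definition burning_number :: "'a set \<Rightarrow> ('a \<times> 'a) set \<Rightarrow> nat" where
  "burning_number V E = (LEAST b. \<exists>vs. length vs = b \<and> is_burning_seq V E vs)"

end

theory Submission
  imports Defs
begin

(* Let b be the least number with 2n \<le> b(b+1), which is the bound of the theorem.
   Every node is reachable from the source s. If no walk of length b starts at s,
   all nodes lie within distance b-1 of s and s alone, burned last, suffices.
   Otherwise there is a node u, reachable from s, that starts a walk of length b-1
   but no longer one. Its reachable set R has at least b nodes (acyclicity makes
   the nodes of a walk distinct), lies within distance b-1 of u and is closed under
   successors; removing it leaves a smaller DAG of at most n-b nodes, still rooted
   at s, which by induction is burned by b-1 nodes, and u is burned last. *)

lemma out_ball_mono:
  assumes "E' \<subseteq> E"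
  shows "out_ball E' k v \<subseteq> out_ball E k v"
proof -
  have "E' ^^ j \<subseteq> E ^^ j" for j
    using assms by (induction j) (auto simp: relcomp_mono)
  then show ?thesis
    unfolding out_ball_def by blast
qed

lemma rtrancl_Image_subset:
  assumes "E \<subseteq> V \<times> V" "v \<in> V"
  shows "E\<^sup>* `` {v} \<subseteq> V"
proof
  fix w assume "w \<in> E\<^sup>* `` {v}"
  then have "(v, w) \<in> E\<^sup>*" by simp
  then show "w \<in> V"
    by (cases rule: rtranclE) (use assms in auto)
qed

lemma out_ball_subset:
  assumes "E \<subseteq> V \<times> V" "v \<in> V"
  shows "out_ball E k v \<subseteq> V"
  using rtrancl_Image_subset[OF assms]
  unfolding out_ball_def by (auto dest: relpow_imp_rtrancl)

lemma out_ball_if_no_longer_walk: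
  assumes "\<forall>w. (v, w) \<notin> E ^^ Suc k"
  shows "E\<^sup>* `` {v} \<subseteq> out_ball E k v"
proof
  fix x assume "x \<in> E\<^sup>* `` {v}"
  then obtain j where j: "(v, x) \<in> E ^^ j"
    using rtrancl_power by blast
  have "j \<le> k"
  proof (rule ccontr)
    assume "\<not> j \<le> k"
    then obtain d where "j = Suc k + d"
      using le_Suc_ex not_less_eq_eq by blast
    then have "(v, x) \<in> E ^^ Suc k O E ^^ d"
      using j by (simp only: relpow_add)
    then show False
      using assms by blast
  qed
  with j show "x \<in> out_ball E k v"
    unfolding out_ball_def by blast
qed

lemma card_rtrancl_Image_gt_walk_length:
  assumes "finite E" "acyclic E" "(u, w) \<in> E ^^ k"
  shows "k < card (E\<^sup>* `` {u})"
  using assms(3)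
proof (induction k arbitrary: u)
  case 0
  have "u \<in> E\<^sup>* `` {u}" by simp
  then show ?case
    using assms(1) by (auto simp: card_gt_0_iff)
next
  case (Suc k)
  obtain y where y: "(u, y) \<in> E" "(y, w) \<in> E ^^ k"
    using relpow_Suc_D2[OF Suc.prems] by blast
  have "(u, u) \<notin> E\<^sup>+"
    using assms(2) unfolding acyclic_def by blast
  then have "(y, u) \<notin> E\<^sup>*"
    using y(1) by (meson rtrancl_into_trancl2)
  then have "E\<^sup>* `` {y} \<subset> E\<^sup>* `` {u}"
    using y(1) by (auto intro: converse_rtrancl_into_rtrancl)
  then have "card (E\<^sup>* `` {y}) < card (E\<^sup>* `` {u})"
    using assms(1) by (simp add: psubset_card_mono)
  with Suc.IH[OF y(2)] show ?case by simp
qed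

lemma exists_walk_of_maximal_length:
  assumes "finite E" "acyclic E" "(s, w) \<in> E ^^ Suc k"
  obtains u where "(s, u) \<in> E\<^sup>+" "\<exists>w. (u, w) \<in> E ^^ k" "\<forall>w. (u, w) \<notin> E ^^ Suc k"
proof -
  define S where "S = {x. (s, x) \<in> E\<^sup>* \<and> (\<exists>w. (x, w) \<in> E ^^ Suc k)}"
  have "s \<in> S"
    using assms(3) unfolding S_def by blast
  moreover have "wf (E\<inverse>)"
    using finite_acyclic_wf_converse[OF assms(1,2)] .
  ultimately obtain m where m: "m \<in> S" "\<forall>y. (y, m) \<in> E\<inverse> \<longrightarrow> y \<notin> S"
    using wf_eq_minimal[THEN iffD1, rule_format] by metis
  then obtain w' where "(m, w') \<in> E ^^ Suc k"
    unfolding S_def by blast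
  then obtain u where u: "(m, u) \<in> E" "(u, w') \<in> E ^^ k"
    by (blast dest: relpow_Suc_D2)
  have "(s, m) \<in> E\<^sup>*"
    using m(1) unfolding S_def by blast
  then have "(s, u) \<in> E\<^sup>+"
    using u(1) by (rule rtrancl_into_trancl1)
  moreover have "u \<notin> S"
    using m(2) u(1) by simp
  ultimately have "\<forall>w. (u, w) \<notin> E ^^ Suc k"
    unfolding S_def by (auto dest: trancl_into_rtrancl)
  with \<open>(s, u) \<in> E\<^sup>+\<close> u(2) show ?thesis
    using that by blast
qed

lemma rtrancl_restrict_to_complement:
  assumes "E `` R \<subseteq> R" "(s, z) \<in> E\<^sup>*" "z \<notin> R"
  shows "(s, z) \<in> (Restr E (- R))\<^sup>*"
  using assms(2,3)
proof (induction rule: rtrancl_induct)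
  case base
  then show ?case by simp
next
  case (step y z)
  then have "y \<notin> R"
    using assms(1) by blast
  with step.IH have "(s, y) \<in> (Restr E (- R))\<^sup>*"
    by blast
  moreover have "(y, z) \<in> Restr E (- R)"
    using step \<open>y \<notin> R\<close> by blast
  ultimately show ?case
    by (rule rtrancl_into_rtrancl)
qed

definition rooted_dag :: "'a set \<Rightarrow> ('a \<times> 'a) set \<Rightarrow> 'a \<Rightarrow> bool" where
  "rooted_dag V E s \<longleftrightarrow> dag V E \<and> s \<in> V \<and> V \<subseteq> E\<^sup>* `` {s}"

lemma reachable_from_sources:
  assumes "wf E" "E \<subseteq> V \<times> V" "v \<in> V"
  shows "\<exists>s \<in> sources V E. (s, v) \<in> E\<^sup>*"
  using assms(1,3)
proof (induction v rule: wf_induct_rule)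
  case (less v)
  show ?case
  proof (cases "\<exists>u. (u, v) \<in> E")
    case True
    then obtain u where "(u, v) \<in> E" by blast
    with less assms(2) show ?thesis
      by (meson SigmaD1 rtrancl.rtrancl_into_rtrancl subsetD)
  next
    case False
    with less.prems show ?thesis
      unfolding sources_def by auto
  qed
qed

lemma rooted_dag_if_unique_source:
  assumes "dag V E" "sources V E = {s}"
  shows "rooted_dag V E s"
proof -
  have "finite E" "E \<subseteq> V \<times> V" "acyclic E"
    using assms(1) finite_subset unfolding dag_def digraph_def by auto
  then have "V \<subseteq> E\<^sup>* `` {s}"
    using reachable_from_sources[OF finite_acyclic_wf \<open>E \<subseteq> V \<times> V\<close>] assms(2) by fastforce
  moreover have "s \<in> V"
    using assms(2) unfolding sources_def by auto
  ultimately show ?thesis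
    using assms(1) unfolding rooted_dag_def by blast
qed

lemma rooted_dag_Diff_reachable:
  assumes "rooted_dag V E s" "(s, u) \<in> E\<^sup>+"
  defines "R \<equiv> E\<^sup>* `` {u}"
  shows "rooted_dag (V - R) (Restr E (- R)) s"
proof -
  have dag: "finite V" "E \<subseteq> V \<times> V" "acyclic E" "s \<in> V" "V \<subseteq> E\<^sup>* `` {s}"
    using assms(1) unfolding rooted_dag_def dag_def digraph_def by auto
  have "s \<notin> R"
    using assms(2) dag(3) unfolding R_def acyclic_def by (auto dest: trancl_rtrancl_trancl)
  have "E `` R \<subseteq> R"
    unfolding R_def by (auto intro: rtrancl_into_rtrancl)
  have "V - R \<subseteq> (Restr E (- R))\<^sup>* `` {s}"
  proof
    fix z assume "z \<in> V - R"
    with dag(5) rtrancl_restrict_to_complement[OF \<open>E `` R \<subseteq> R\<close>]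
    show "z \<in> (Restr E (- R))\<^sup>* `` {s}"
      by blast
  qed
  moreover have "dag (V - R) (Restr E (- R))"
    using dag(1-3) acyclic_subset[OF dag(3)] unfolding dag_def digraph_def by blast
  ultimately show ?thesis
    using dag(4) \<open>s \<notin> R\<close> unfolding rooted_dag_def by blast
qed

lemma is_burning_seqI:
  assumes "E \<subseteq> V \<times> V" "set vs \<subseteq> V" "V \<subseteq> (\<Union>i<length vs. out_ball E i (vs ! i))"
  shows "is_burning_seq V E vs"
proof -
  have "out_ball E i (vs ! i) \<subseteq> V" if "i < length vs" for i
    using out_ball_subset[OF assms(1)] assms(2) nth_mem[OF that] by blast
  with assms(2,3) show ?thesis
    unfolding is_burning_seq_def by blast
qed

lemma is_burning_seq_snoc:
  assumes "E \<subseteq> V \<times> V" "is_burning_seq V' E' vs" "E' \<subseteq> E" "V' \<subseteq> V" "u \<in> V"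
    and "V \<subseteq> V' \<union> out_ball E (length vs) u"
  shows "is_burning_seq V E (vs @ [u])"
proof (rule is_burning_seqI[OF assms(1)])
  show "set (vs @ [u]) \<subseteq> V"
    using assms(2,4,5) unfolding is_burning_seq_def by auto
  let ?ball = "\<lambda>i. out_ball E i ((vs @ [u]) ! i)"
  have "V' \<subseteq> (\<Union>i<length vs. ?ball i)"
    using assms(2) out_ball_mono[OF assms(3)]
    unfolding is_burning_seq_def by (force simp: nth_append)
  also have "\<dots> \<subseteq> (\<Union>i<length (vs @ [u]). ?ball i)"
    by (intro UN_mono) auto
  finally have "V' \<subseteq> (\<Union>i<length (vs @ [u]). ?ball i)" .
  moreover have "out_ball E (length vs) u \<subseteq> (\<Union>i<length (vs @ [u]). ?ball i)"
    using UN_upper[of "length vs" "{..<length (vs @ [u])}" ?ball] by simp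
  ultimately show "V \<subseteq> (\<Union>i<length (vs @ [u]). ?ball i)"
    using assms(6) by blast
qed

lemma burning_seq_of_rooted_dag:
  assumes "rooted_dag V E s" "2 * card V \<le> b * (b + 1)"
  shows "\<exists>vs. length vs = b \<and> is_burning_seq V E vs"
  using assms
proof (induction b arbitrary: V E)
  case 0
  then show ?case
    unfolding rooted_dag_def dag_def digraph_def by auto
next
  case (Suc k)
  have dag: "finite V" "E \<subseteq> V \<times> V" "acyclic E" "s \<in> V" "V \<subseteq> E\<^sup>* `` {s}"
    using Suc.prems(1) unfolding rooted_dag_def dag_def digraph_def by auto
  then have "finite E"
    using finite_subset by blast
  show ?case
  proof (cases "\<exists>w. (s, w) \<in> E ^^ Suc k")
    case False
    then have "V \<subseteq> out_ball E k s"
      using out_ball_if_no_longer_walk[of s k E] dag(5) by blast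
    then have "is_burning_seq V E (replicate (Suc k) s)"
      using dag(2,4) by (intro is_burning_seqI) (auto simp del: replicate_Suc)
    then show ?thesis
      by (intro exI[of _ "replicate (Suc k) s"]) simp
  next
    case True
    then obtain w where "(s, w) \<in> E ^^ Suc k" ..
    then obtain u where u: "(s, u) \<in> E\<^sup>+" "\<exists>w. (u, w) \<in> E ^^ k" "\<forall>w. (u, w) \<notin> E ^^ Suc k"
      by (rule exists_walk_of_maximal_length[OF \<open>finite E\<close> dag(3)])
    define R where "R = E\<^sup>* `` {u}"
    have "u \<in> V"
      using u(1) dag(2) by (auto dest: tranclD2)
    then have "R \<subseteq> V"
      using rtrancl_Image_subset[OF dag(2)] unfolding R_def by blast
    have "k < card R"
      using card_rtrancl_Image_gt_walk_length[OF \<open>finite E\<close> dag(3)] u(2)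
      unfolding R_def by blast
    then have "2 * card (V - R) \<le> k * (k + 1)"
      using Suc.prems(2) card_Diff_subset[OF finite_subset[OF \<open>R \<subseteq> V\<close> dag(1)] \<open>R \<subseteq> V\<close>]
        card_mono[OF dag(1) \<open>R \<subseteq> V\<close>] by (simp add: algebra_simps)
    then obtain vs where vs: "length vs = k" "is_burning_seq (V - R) (Restr E (- R)) vs"
      using Suc.IH rooted_dag_Diff_reachable[OF Suc.prems(1) u(1)] unfolding R_def by blast
    have "V \<subseteq> (V - R) \<union> out_ball E (length vs) u"
      using out_ball_if_no_longer_walk[OF u(3)] vs(1) unfolding R_def by blast
    then have "is_burning_seq V E (vs @ [u])"
      using is_burning_seq_snoc[OF dag(2) vs(2) _ _ \<open>u \<in> V\<close>] by blast
    then show ?thesis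
      using vs(1) by (intro exI[of _ "vs @ [u]"]) simp
  qed
qed

lemma triangular_root_ceiling:
  fixes n :: nat
  obtains b :: nat where "int b = \<lceil>sqrt (2 * real n + 1/4) - 1/2\<rceil>" "2 * n \<le> b * (b + 1)"
proof -
  define x where "x = sqrt (2 * real n + 1/4) - 1/2"
  define b where "b = nat \<lceil>x\<rceil>"
  have "sqrt (2 * real n + 1/4) \<ge> 1/2"
    by (rule real_le_rsqrt) (auto simp: power2_eq_square)
  then have "0 \<le> x"
    unfolding x_def by simp
  then have "int b = \<lceil>x\<rceil>" "x \<le> real b"
    unfolding b_def by linarith+
  then have "(x + 1/2)\<^sup>2 \<le> (real b + 1/2)\<^sup>2"
    using \<open>0 \<le> x\<close> by (intro power_mono) auto
  moreover have "(x + 1/2)\<^sup>2 = 2 * real n + 1/4"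
    unfolding x_def by simp
  ultimately have "real (2 * n) \<le> real (b * (b + 1))"
    by (simp add: power2_eq_square algebra_simps)
  then have "2 * n \<le> b * (b + 1)"
    by linarith
  with \<open>int b = \<lceil>x\<rceil>\<close> show ?thesis
    using that unfolding x_def by blast
qed

lemma burning_number_le_length:
  assumes "is_burning_seq V E vs"
  shows "burning_number V E \<le> length vs"
  unfolding burning_number_def using assms by (intro Least_le) blast

theorem mainTheorem5:
  fixes V :: "'a set" and E :: "('a \<times> 'a) set"
  assumes "dag V E"
    and "card (sources V E) = 1"
  shows "int (burning_number V E) \<le> \<lceil>sqrt (2 * real (card V) + 1/4) - 1/2\<rceil>"
proof -
  obtain s where "sources V E = {s}"
    using assms(2) card_1_singletonE by blast
  with assms(1) have "rooted_dag V E s"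
    by (rule rooted_dag_if_unique_source)
  obtain b where b: "int b = \<lceil>sqrt (2 * real (card V) + 1/4) - 1/2\<rceil>" "2 * card V \<le> b * (b + 1)"
    using triangular_root_ceiling .
  obtain vs where "length vs = b" "is_burning_seq V E vs"
    using burning_seq_of_rooted_dag[OF \<open>rooted_dag V E s\<close> b(2)] by blast
  then have "burning_number V E \<le> b"
    using burning_number_le_length by blast
  with b(1) show ?thesis
    by linarith
qed

end
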